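(* In the $\mathsf{CD}^\star$ model, there is a deterministic algorithm that computes a $(2,\log N)$-ruling set of the network using $O(N)$ time and $O(\log N)$ energy, and using only 1-bit messages.
   Context: Radio network: connected undirected graph $G$; synchronized slots; each vertex transmits, listens or idles per slot, transmit/listen costing one unit of energy (energy = maximum per-vertex number of such slots). The $\mathsf{CD}^\star$ model: a listener hears silence if no neighbor transmits, and if at least one neighbor transmits it receives the message of one of the transmitting neighbors (arbitrarily chosen if several transmit). Deterministic setting: vertices have distinct IDs in $\{1,\ldots,N\}$. An $(\alpha,\beta)$-ruling set of $G$ is a set $I$ of vertices such that (i) $\mathrm{dist}(u,v)\ge\alpha$ for all distinct $u,v\in I$, and (ii) for every vertex $u$ there is $v\in I$ with $\mathrm{dist}(u,v)\le\beta$. *)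

theory Defs
  imports Complex_Main
begin

definition graph_dist :: "(nat \<Rightarrow> nat \<Rightarrow> bool) \<Rightarrow> nat \<Rightarrow> nat \<Rightarrow> nat" where
  "graph_dist E u v = (LEAST k. (E ^^ k) u v)"

definition connected_graph :: "nat set \<Rightarrow> (nat \<Rightarrow> nat \<Rightarrow> bool) \<Rightarrow> bool" where
  "connected_graph V E \<longleftrightarrow> finite V \<and> V \<noteq> {}
     \<and> (\<forall>u v. E u v \<longrightarrow> u \<in> V \<and> v \<in> V)
     \<and> (\<forall>u v. E u v \<longrightarrow> E v u)
     \<and> (\<forall>u. \<not> E u u)
     \<and> (\<forall>u\<in>V. \<forall>v\<in>V. \<exists>k. (E ^^ k) u v)"

definition ruling_set ::
  "nat set \<Rightarrow> (nat \<Rightarrow> nat \<Rightarrow> bool) \<Rightarrow> nat \<Rightarrow> real \<Rightarrow> nat set \<Rightarrow> bool" where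
  "ruling_set V E \<alpha> \<beta> I \<longleftrightarrow> I \<subseteq> V
     \<and> (\<forall>u\<in>I. \<forall>v\<in>I. u \<noteq> v \<longrightarrow> \<alpha> \<le> graph_dist E u v)
     \<and> (\<forall>u\<in>V. \<exists>v\<in>I. real (graph_dist E u v) \<le> \<beta>)"

datatype action = Transmit bool | Listen | Idle

text \<open>Feedback a vertex obtains in a slot: NoFb when transmitting or idling
 (no feedback), Silence or a heard message when listening.\<close>
datatype feedback = NoFb | Silence | Heard bool

text \<open>A deterministic algorithm: each vertex's behaviour is a function of
 N, its own ID, and the history of its own feedback (full-information local state).
 out gives the vertex's decision (None = not yet terminated; Some b = terminated,
 b says whether the vertex is in the ruling set).\<close>
record algorithm =
  act :: "nat \<Rightarrow> nat \<Rightarrow> feedback list \<Rightarrow> action"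
  out :: "nat \<Rightarrow> nat \<Rightarrow> feedback list \<Rightarrow> bool option"

definition halting :: "algorithm \<Rightarrow> bool" where
  "halting A \<longleftrightarrow> (\<forall>N i h f. out A N i h \<noteq> None \<longrightarrow>
      act A N i h = Idle \<and> out A N i (h @ [f]) = out A N i h)"

text \<open>An adversary resolves collisions: given a nonempty set of bits transmitted by
 neighbours of a listener, it selects one of them (arbitrary choice).\<close>
definition valid_adversary :: "(nat \<Rightarrow> nat \<Rightarrow> bool set \<Rightarrow> bool) \<Rightarrow> bool" where
  "valid_adversary sel \<longleftrightarrow> (\<forall>t v M. M \<noteq> {} \<longrightarrow> sel t v M \<in> M)"

definition slot_feedback ::
  "algorithm \<Rightarrow> nat \<Rightarrow> (nat \<Rightarrow> nat) \<Rightarrow> (nat \<Rightarrow> nat \<Rightarrow> bool)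
    \<Rightarrow> (nat \<Rightarrow> nat \<Rightarrow> bool set \<Rightarrow> bool) \<Rightarrow> nat \<Rightarrow> (nat \<Rightarrow> feedback list) \<Rightarrow> nat \<Rightarrow> feedback" where
  "slot_feedback A N ident E sel t H v =
     (case act A N (ident v) (H v) of
        Listen \<Rightarrow>
          (let M = {m. \<exists>u. E v u \<and> act A N (ident u) (H u) = Transmit m}
           in if M = {} then Silence else Heard (sel t v M))
      | _ \<Rightarrow> NoFb)"

primrec hist ::
  "algorithm \<Rightarrow> nat \<Rightarrow> (nat \<Rightarrow> nat) \<Rightarrow> (nat \<Rightarrow> nat \<Rightarrow> bool)
    \<Rightarrow> (nat \<Rightarrow> nat \<Rightarrow> bool set \<Rightarrow> bool) \<Rightarrow> nat \<Rightarrow> nat \<Rightarrow> feedback list" where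
  "hist A N ident E sel 0 = (\<lambda>v. [])"
| "hist A N ident E sel (Suc t) =
     (\<lambda>v. hist A N ident E sel t v @
          [slot_feedback A N ident E sel t (hist A N ident E sel t) v])"

definition energy ::
  "algorithm \<Rightarrow> nat \<Rightarrow> (nat \<Rightarrow> nat) \<Rightarrow> (nat \<Rightarrow> nat \<Rightarrow> bool)
    \<Rightarrow> (nat \<Rightarrow> nat \<Rightarrow> bool set \<Rightarrow> bool) \<Rightarrow> nat \<Rightarrow> nat \<Rightarrow> nat" where
  "energy A N ident E sel T v =
     card {t. t < T \<and> act A N (ident v) (hist A N ident E sel t v) \<noteq> Idle}"

definition valid_ids :: "nat set \<Rightarrow> nat \<Rightarrow> (nat \<Rightarrow> nat) \<Rightarrow> bool" where
  "valid_ids V N ident \<longleftrightarrow> inj_on ident V \<and> ident ` V \<subseteq> {1..N}"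

end

theory Submission
  imports Defs "HOL-Library.Log_Nat"
begin

text \<open>Let k = \<lceil>log N\<rceil> and identify the vertex with ID i with the leaf 2 ^ k + i - 1 of the
  complete binary tree on 1, ..., 2 ^ (k + 1) - 1 in heap numbering. The internal nodes are processed
  bottom-up, one per slot: the surviving vertices below the left child transmit, those below the right
  child listen, and a listener that hears anything drops out. By induction over the tree, once node n
  has been processed the survivors below n are independent, and every vertex w below n has a survivor
  below n within distance the number of right turns on the path from n to the leaf of w. At the root
  this is the number of ones in the binary expansion of i - 1, hence at most log N. There are
  2 ^ k - 1 < 2 N slots, and a vertex is active only in the k slots of its ancestors. Collision
  resolution is irrelevant, since a listener only needs to know whether some neighbour transmitted.\<close>

fun popcount :: "nat \<Rightarrow> nat" where
  "popcount x = (if x = 0 then 0 else x mod 2 + popcount (x div 2))"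

declare popcount.simps [simp del]

lemma popcount_0 [simp]: "popcount 0 = 0"
  by (simp add: popcount.simps)

lemma popcount_double: "popcount (2 * n) = popcount n"
  by (cases "n = 0") (simp, subst popcount.simps, simp)

lemma popcount_double_Suc: "popcount (2 * n + 1) = popcount n + 1"
  by (subst popcount.simps) simp

lemma popcount_div_power_le: "popcount (x div 2 ^ j) \<le> popcount x"
proof (induction j)
  case (Suc j)
  have "popcount (x div 2 ^ Suc j) \<le> popcount (x div 2 ^ j)"
    by (cases "x div 2 ^ j = 0")
      (simp_all add: popcount.simps[of "x div 2 ^ j"] div_mult2_eq mult.commute[of 2])
  with Suc show ?case by simp
qed simp

lemma popcount_power_add: "x < 2 ^ k \<Longrightarrow> popcount (2 ^ k + x) = popcount x + 1"
proof (induction k arbitrary: x)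
  case 0
  then show ?case by (simp add: popcount.simps)
next
  case (Suc k)
  have "popcount (2 ^ Suc k + x) = x mod 2 + popcount (2 ^ k + x div 2)"
    by (subst popcount.simps) simp
  with Suc.IH[of "x div 2"] Suc.prems show ?case
    by (cases "x = 0") (simp_all add: popcount.simps[of x])
qed

lemma power_popcount_le: "2 ^ popcount x \<le> x + 1"
proof (induction x rule: less_induct)
  case (less x)
  show ?case
  proof (cases "x = 0")
    case False
    then have "popcount x = x mod 2 + popcount (x div 2)" by (simp add: popcount.simps)
    moreover have "2 ^ popcount (x div 2) \<le> x div 2 + 1" using less False by simp
    ultimately show ?thesis
      by (cases "x mod 2 = 0") (auto simp: power_add, presburger+)
  qed simp
qed

definition in_subtree :: "nat \<Rightarrow> nat \<Rightarrow> bool" where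
  "in_subtree x n \<longleftrightarrow> (\<exists>j. x div 2 ^ j = n)"

lemma div_power_le_div2: "i \<noteq> 0 \<Longrightarrow> (m::nat) div 2 ^ i \<le> m div 2"
  by (cases i) (simp_all add: div_mult2_eq div_le_mono div_le_dividend)

lemma in_subtree_parent:
  assumes "in_subtree x (2 * n) \<or> in_subtree x (2 * n + 1)"
  shows "in_subtree x n"
proof -
  obtain j where "x div 2 ^ j = 2 * n \<or> x div 2 ^ j = 2 * n + 1"
    using assms in_subtree_def by auto
  then have "x div 2 ^ Suc j = n" by (auto simp: div_mult2_eq mult.commute[of 2])
  then show ?thesis unfolding in_subtree_def by blast
qed

lemma in_subtree_child:
  assumes "in_subtree x n" "n < 2 ^ k" "2 ^ k \<le> x"
  shows "in_subtree x (2 * n) \<or> in_subtree x (2 * n + 1)"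
proof -
  obtain j where j: "x div 2 ^ j = n" using assms(1) in_subtree_def by auto
  with assms obtain i where i: "j = Suc i" by (cases j) auto
  have "(x div 2 ^ i) div 2 = n" using j i by (simp add: div_mult2_eq mult.commute[of 2])
  then have "x div 2 ^ i = 2 * n \<or> x div 2 ^ i = 2 * n + 1" by linarith
  then show ?thesis unfolding in_subtree_def by blast
qed

lemma in_subtree_chain:
  assumes "in_subtree x a" "in_subtree x b" "a \<le> b"
  shows "in_subtree b a"
proof -
  obtain i j where i: "x div 2 ^ i = a" and j: "x div 2 ^ j = b"
    using assms in_subtree_def by auto
  show ?thesis
  proof (cases "j \<le> i")
    case True
    then have "(2::nat) ^ i = 2 ^ j * 2 ^ (i - j)" by (simp add: power_add[symmetric])
    then have "b div 2 ^ (i - j) = a" using i j by (simp add: div_mult2_eq)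
    then show ?thesis unfolding in_subtree_def by blast
  next
    case False
    then have "(2::nat) ^ j = 2 ^ i * 2 ^ (j - i)" by (simp add: power_add[symmetric])
    then have "x div 2 ^ j = x div 2 ^ i div 2 ^ (j - i)" by (simp add: div_mult2_eq)
    then have "a = b" using i j assms(3) by (simp add: le_antisym div_le_dividend)
    then show ?thesis unfolding in_subtree_def by (intro exI[of _ 0]) simp
  qed
qed

text \<open>The ancestors x div 2 ^ j of a leaf x lie on distinct levels.\<close>
lemma in_subtree_between_parent:
  assumes "in_subtree x m" "in_subtree x n" "m div 2 < n" "n < m"
  shows False
proof -
  obtain i where i: "m div 2 ^ i = n"
    using in_subtree_chain[OF assms(2,1)] assms(4) unfolding in_subtree_def by auto
  then show False using assms(3,4) div_power_le_div2[of i m] by (cases "i = 0") auto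
qed

lemma in_subtree_children_disjoint:
  assumes "in_subtree x (2 * n)" "in_subtree x (2 * n + 1)" "1 \<le> n"
  shows False
  using in_subtree_between_parent[OF assms(2,1)] assms(3) by simp

lemma in_subtree_popcount_le: "in_subtree x n \<Longrightarrow> popcount n \<le> popcount x"
  unfolding in_subtree_def using popcount_div_power_le by auto

lemma in_subtree_leaf_eq:
  assumes "in_subtree x n" "2 ^ k \<le> n" "x < 2 ^ Suc k"
  shows "x = n"
proof -
  obtain j where j: "x div 2 ^ j = n" using assms(1) in_subtree_def by auto
  show ?thesis
  proof (cases "j = 0")
    case False
    then have "x div 2 ^ j < 2 ^ k" using div_power_le_div2[of j x] assms(3) by simp
    then show ?thesis using j assms(2) by simp
  qed (use j in simp)
qed

lemma in_subtree_root:
  assumes "2 ^ k \<le> x" "x < 2 ^ Suc k"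
  shows "in_subtree x 1"
proof -
  have "x div 2 ^ k = 1"
    using assms by (intro div_nat_eqI) simp_all
  then show ?thesis unfolding in_subtree_def by blast
qed

lemma heap_node_induct:
  assumes "1 \<le> n" "n < (2::nat) ^ Suc k"
    and leaf: "\<And>n. 2 ^ k \<le> n \<Longrightarrow> n < 2 ^ Suc k \<Longrightarrow> P n"
    and internal: "\<And>n. 1 \<le> n \<Longrightarrow> n < 2 ^ k \<Longrightarrow> P (2 * n) \<Longrightarrow> P (2 * n + 1) \<Longrightarrow> P n"
  shows "P n"
  using assms(1,2)
proof (induction "2 ^ Suc k - n" arbitrary: n rule: less_induct)
  case less
  show ?case
  proof (cases "2 ^ k \<le> n")
    case True
    then show ?thesis using less.prems(2) by (rule leaf)
  next
    case False
    then have "n < 2 ^ k" by simp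
    then have "2 * n + 1 < 2 ^ Suc k" by simp
    then have "P (2 * n)" "P (2 * n + 1)"
      using less.prems(1) by (intro less.hyps; linarith)+
    with less.prems(1) \<open>n < 2 ^ k\<close> show ?thesis by (rule internal)
  qed
qed

lemma graph_dist_walk: "(E ^^ j) u v \<Longrightarrow> (E ^^ graph_dist E u v) u v"
  unfolding graph_dist_def by (rule LeastI)

lemma graph_dist_le: "(E ^^ j) u v \<Longrightarrow> graph_dist E u v \<le> j"
  unfolding graph_dist_def by (rule Least_le)

lemma graph_dist_self: "graph_dist E w w = 0"
  unfolding graph_dist_def by (rule Least_eq_0) simp

lemma graph_dist_Suc_le:
  assumes "(E ^^ j) w v" "E v u"
  shows "graph_dist E w u \<le> graph_dist E w v + 1"
  using graph_dist_le[OF relpowp_Suc_I[OF graph_dist_walk[OF assms(1)] assms(2)]] by simp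

lemma graph_dist_ge_2:
  assumes "(E ^^ j) u v" "u \<noteq> v" "\<not> E u v"
  shows "2 \<le> graph_dist E u v"
proof (rule ccontr)
  assume "\<not> 2 \<le> graph_dist E u v"
  then have "graph_dist E u v = 0 \<or> graph_dist E u v = 1" by auto
  with graph_dist_walk[OF assms(1)] assms(2,3) show False by auto
qed

lemma length_hist [simp]: "length (hist A N ident E sel t v) = t"
  by (induction t) auto

definition never_heard :: "feedback list \<Rightarrow> bool" where
  "never_heard h \<longleftrightarrow> (\<forall>b. Heard b \<notin> set h)"

lemma never_heard_hist_Suc:
  "never_heard (hist A N ident E sel (Suc t) v) \<longleftrightarrow> never_heard (hist A N ident E sel t v) \<and>
     \<not> (act A N (ident v) (hist A N ident E sel t v) = Listen \<and>
        (\<exists>u m. E v u \<and> act A N (ident u) (hist A N ident E sel t u) = Transmit m))"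
proof -
  have "(\<forall>b. slot_feedback A N ident E sel t (hist A N ident E sel t) v \<noteq> Heard b) \<longleftrightarrow>
     \<not> (act A N (ident v) (hist A N ident E sel t v) = Listen \<and>
        (\<exists>u m. E v u \<and> act A N (ident u) (hist A N ident E sel t u) = Transmit m))"
    unfolding slot_feedback_def
    by (cases "act A N (ident v) (hist A N ident E sel t v)") (auto simp: Let_def)
  moreover have "never_heard (h @ [f]) \<longleftrightarrow> never_heard h \<and> (\<forall>b. f \<noteq> Heard b)" for h f
    by (auto simp: never_heard_def)
  ultimately show ?thesis by simp
qed

definition heap_leaf :: "nat \<Rightarrow> nat \<Rightarrow> nat" where
  "heap_leaf N i = 2 ^ ceillog2 N + (i - 1)"

text \<open>Slot t processes the internal node 2 ^ k - 1 - t, so node n has been processed at time 2 ^ k - n.\<close>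
definition ruling_alg :: algorithm where
  "ruling_alg =
     \<lparr>act = (\<lambda>N i h. let k = ceillog2 N; n = 2 ^ k - 1 - length h in
         if length h < 2 ^ k - 1 \<and> never_heard h then
           if in_subtree (heap_leaf N i) (2 * n) then Transmit True
           else if in_subtree (heap_leaf N i) (2 * n + 1) then Listen else Idle
         else Idle),
      out = (\<lambda>N i h. let T = 2 ^ ceillog2 N - 1 in
         if T \<le> length h then Some (never_heard (take T h)) else None)\<rparr>"

lemma halting_ruling_alg: "halting ruling_alg"
  unfolding halting_def ruling_alg_def by (auto simp: Let_def)

locale ruling_run =
  fixes N :: nat and V :: "nat set" and E :: "nat \<Rightarrow> nat \<Rightarrow> bool" and ident :: "nat \<Rightarrow> nat"
    and sel :: "nat \<Rightarrow> nat \<Rightarrow> bool set \<Rightarrow> bool"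
  assumes connected: "connected_graph V E" and ids: "valid_ids V N ident"
begin

abbreviation k :: nat where "k \<equiv> ceillog2 N"

abbreviation H :: "nat \<Rightarrow> nat \<Rightarrow> feedback list" where "H \<equiv> hist ruling_alg N ident E sel"

abbreviation alive :: "nat \<Rightarrow> nat \<Rightarrow> bool" where "alive t v \<equiv> never_heard (H t v)"

definition leaf :: "nat \<Rightarrow> nat" where "leaf v = heap_leaf N (ident v)"

definition below :: "nat \<Rightarrow> nat set" where "below n = {v \<in> V. in_subtree (leaf v) n}"

lemma edge_in_V: "E u v \<Longrightarrow> u \<in> V \<and> v \<in> V"
  using connected unfolding connected_graph_def by blast

lemma edge_sym: "E u v \<Longrightarrow> E v u"
  using connected unfolding connected_graph_def by blast

lemma edge_irrefl: "\<not> E v v"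
  using connected unfolding connected_graph_def by blast

lemma reachable: "u \<in> V \<Longrightarrow> v \<in> V \<Longrightarrow> \<exists>j. (E ^^ j) u v"
  using connected unfolding connected_graph_def by blast

lemma ident_range: "v \<in> V \<Longrightarrow> 1 \<le> ident v \<and> ident v \<le> N"
  using ids unfolding valid_ids_def by auto

lemma N_pos: "0 < N"
proof -
  obtain v where "v \<in> V" using connected unfolding connected_graph_def by auto
  then show ?thesis using ident_range by fastforce
qed

lemma leaf_bounds: "v \<in> V \<Longrightarrow> 2 ^ k \<le> leaf v \<and> leaf v < 2 ^ Suc k"
  using ident_range[of v] le_two_power_ceillog2[of N] unfolding leaf_def heap_leaf_def by auto

lemma leaf_inj: "u \<in> V \<Longrightarrow> v \<in> V \<Longrightarrow> leaf u = leaf v \<Longrightarrow> u = v"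
  using ident_range[of u] ident_range[of v] ids
  unfolding leaf_def heap_leaf_def valid_ids_def inj_on_def by auto

lemma act_hist:
  "act ruling_alg N (ident v) (H t v) =
     (if t < 2 ^ k - 1 \<and> alive t v then
        if in_subtree (leaf v) (2 * (2 ^ k - 1 - t)) then Transmit True
        else if in_subtree (leaf v) (2 * (2 ^ k - 1 - t) + 1) then Listen else Idle
      else Idle)"
  by (simp add: ruling_alg_def leaf_def Let_def)

lemma out_hist: "out ruling_alg N (ident v) (H (2 ^ k - 1) v) = Some (alive (2 ^ k - 1) v)"
  by (simp add: ruling_alg_def)

lemma alive_Suc:
  "alive (Suc t) v \<longleftrightarrow> alive t v \<and>
     \<not> (act ruling_alg N (ident v) (H t v) = Listen \<and>
        (\<exists>u. E v u \<and> t < 2 ^ k - 1 \<and> alive t u \<and> in_subtree (leaf u) (2 * (2 ^ k - 1 - t))))"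
  unfolding never_heard_hist_Suc act_hist[of _ u for u] by (auto split: if_splits)

text \<open>From the time node m has been processed until the slot of its parent, no vertex below m listens.\<close>
lemma alive_stable:
  assumes "v \<in> below m" "2 ^ k - m \<le> t" "t \<le> 2 ^ k - 1 - m div 2"
  shows "alive t v = alive (2 ^ k - m) v"
  using assms(2,3)
proof (induction t)
  case (Suc t)
  show ?case
  proof (cases "2 ^ k - m = Suc t")
    case False
    then have t: "2 ^ k - m \<le> t" "t \<le> 2 ^ k - 1 - m div 2" using Suc.prems by linarith+
    have "m div 2 < 2 ^ k - 1 - t" "2 ^ k - 1 - t < m" using Suc.prems t by linarith+
    then have "\<not> in_subtree (leaf v) (2 ^ k - 1 - t)"
      using in_subtree_between_parent[of "leaf v" m] assms(1) unfolding below_def by blast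
    then have "\<not> in_subtree (leaf v) (2 * (2 ^ k - 1 - t) + 1)" using in_subtree_parent by blast
    then have "act ruling_alg N (ident v) (H t v) \<noteq> Listen" unfolding act_hist by simp
    then show ?thesis using alive_Suc Suc.IH t by simp
  qed simp
qed simp

lemma below_children: "n < 2 ^ k \<Longrightarrow> below n = below (2 * n) \<union> below (2 * n + 1)"
  unfolding below_def using in_subtree_child leaf_bounds in_subtree_parent by blast

lemma below_leaf_unique: "2 ^ k \<le> n \<Longrightarrow> u \<in> below n \<Longrightarrow> v \<in> below n \<Longrightarrow> u = v"
  unfolding below_def using in_subtree_leaf_eq leaf_bounds leaf_inj by (metis mem_Collect_eq)

lemma below_root: "below 1 = V"
  unfolding below_def using in_subtree_root leaf_bounds by blast

lemma act_slot:
  assumes "n < 2 ^ k" "v \<in> V"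
  shows "act ruling_alg N (ident v) (H (2 ^ k - 1 - n) v) =
     (if alive (2 ^ k - 1 - n) v \<and> 1 \<le> n then
        if in_subtree (leaf v) (2 * n) then Transmit True
        else if in_subtree (leaf v) (2 * n + 1) then Listen else Idle
      else Idle)"
proof -
  have "2 ^ k - 1 - (2 ^ k - 1 - n) = n" "2 ^ k - 1 - n < 2 ^ k - 1 \<longleftrightarrow> 1 \<le> n"
    using assms(1) by linarith+
  then show ?thesis unfolding act_hist by presburger
qed

lemma alive_slot_left:
  assumes "1 \<le> n" "n < 2 ^ k" "v \<in> below (2 * n)"
  shows "alive (2 ^ k - n) v = alive (2 ^ k - 2 * n) v"
proof -
  have "act ruling_alg N (ident v) (H (2 ^ k - 1 - n) v) \<noteq> Listen"
    using assms act_slot unfolding below_def by simp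
  moreover have "2 ^ k - n = Suc (2 ^ k - 1 - n)" using assms(2) by linarith
  ultimately have "alive (2 ^ k - n) v = alive (2 ^ k - 1 - n) v"
    using alive_Suc[of "2 ^ k - 1 - n"] by simp
  also have "\<dots> = alive (2 ^ k - 2 * n) v"
    by (rule alive_stable) (use assms in simp_all)
  finally show ?thesis .
qed

lemma alive_slot_right:
  assumes "1 \<le> n" "n < 2 ^ k" "v \<in> below (2 * n + 1)"
  shows "alive (2 ^ k - n) v \<longleftrightarrow>
    alive (2 ^ k - (2 * n + 1)) v \<and> \<not> (\<exists>u \<in> below (2 * n). E v u \<and> alive (2 ^ k - 2 * n) u)"
proof -
  let ?s = "2 ^ k - 1 - n"
  have v: "v \<in> V" "in_subtree (leaf v) (2 * n + 1)" using assms(3) unfolding below_def by auto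
  then have "\<not> in_subtree (leaf v) (2 * n)" using assms(1) in_subtree_children_disjoint by blast
  then have listen: "act ruling_alg N (ident v) (H ?s v) = Listen \<longleftrightarrow> alive ?s v"
    using act_slot[OF assms(2) v(1)] v(2) assms(1) by simp
  have "2 ^ k - n = Suc ?s" "?s < 2 ^ k - 1" "2 ^ k - 1 - ?s = n" using assms(1,2) by linarith+
  then have "alive (2 ^ k - n) v \<longleftrightarrow> alive ?s v \<and>
      \<not> (\<exists>u. E v u \<and> alive ?s u \<and> in_subtree (leaf u) (2 * n))"
    using alive_Suc[of ?s v] listen by auto
  also have "\<dots> \<longleftrightarrow> alive (2 ^ k - (2 * n + 1)) v \<and>
      \<not> (\<exists>u \<in> below (2 * n). E v u \<and> alive (2 ^ k - 2 * n) u)"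
  proof -
    have "alive ?s v = alive (2 ^ k - (2 * n + 1)) v"
      by (rule alive_stable[OF assms(3)]) simp_all
    moreover have "alive ?s u = alive (2 ^ k - 2 * n) u" if "u \<in> below (2 * n)" for u
      by (rule alive_stable[OF that]) (use assms(1) in simp_all)
    ultimately show ?thesis using edge_in_V unfolding below_def by auto
  qed
  finally show ?thesis .
qed

definition independent_below :: "nat \<Rightarrow> bool" where
  "independent_below n \<longleftrightarrow>
     (\<forall>u \<in> below n. \<forall>v \<in> below n. alive (2 ^ k - n) u \<longrightarrow> alive (2 ^ k - n) v \<longrightarrow> \<not> E u v)"

definition dominated_below :: "nat \<Rightarrow> bool" where
  "dominated_below n \<longleftrightarrow> (\<forall>w \<in> below n. \<exists>v \<in> below n.
     alive (2 ^ k - n) v \<and> graph_dist E w v \<le> popcount (leaf w) - popcount n)"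

lemma independent_below_leaf: "2 ^ k \<le> n \<Longrightarrow> independent_below n"
  unfolding independent_below_def using below_leaf_unique edge_irrefl by blast

lemma dominated_below_leaf: "2 ^ k \<le> n \<Longrightarrow> dominated_below n"
  unfolding dominated_below_def
  by (intro ballI bexI[where x = w for w]) (auto simp: graph_dist_self never_heard_def)

lemma independent_below_parent:
  assumes "1 \<le> n" "n < 2 ^ k" "independent_below (2 * n)" "independent_below (2 * n + 1)"
  shows "independent_below n"
  unfolding independent_below_def
proof (intro ballI impI notI)
  fix u v assume uv: "u \<in> below n" "v \<in> below n" "alive (2 ^ k - n) u" "alive (2 ^ k - n) v" "E u v"
  have cross: False if "x \<in> below (2 * n)" "y \<in> below (2 * n + 1)"
    "alive (2 ^ k - n) x" "alive (2 ^ k - n) y" "E y x" for x y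
    using that alive_slot_left[OF assms(1,2)] alive_slot_right[OF assms(1,2)] by blast
  consider
      "u \<in> below (2 * n)" "v \<in> below (2 * n)" | "u \<in> below (2 * n + 1)" "v \<in> below (2 * n + 1)"
    | "u \<in> below (2 * n)" "v \<in> below (2 * n + 1)" | "u \<in> below (2 * n + 1)" "v \<in> below (2 * n)"
    using uv below_children[OF assms(2)] by blast
  then show False
  proof cases
    case 1
    then show False using assms(3) uv alive_slot_left[OF assms(1,2)] unfolding independent_below_def by blast
  next
    case 2
    then show False using assms(4) uv alive_slot_right[OF assms(1,2)] unfolding independent_below_def by blast
  next
    case 3
    then show False using cross uv edge_sym by blast
  next
    case 4
    then show False using cross uv by blast
  qed
qed

lemma dominated_below_parent:
  assumes "1 \<le> n" "n < 2 ^ k" "dominated_below (2 * n)" "dominated_below (2 * n + 1)"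
  shows "dominated_below n"
  unfolding dominated_below_def
proof
  fix w assume "w \<in> below n"
  then consider "w \<in> below (2 * n)" | "w \<in> below (2 * n + 1)" using below_children[OF assms(2)] by blast
  then show "\<exists>v \<in> below n. alive (2 ^ k - n) v \<and> graph_dist E w v \<le> popcount (leaf w) - popcount n"
  proof cases
    case 1
    then obtain v where v: "v \<in> below (2 * n)" "alive (2 ^ k - 2 * n) v"
      "graph_dist E w v \<le> popcount (leaf w) - popcount (2 * n)"
      using assms(3) unfolding dominated_below_def by blast
    then show ?thesis using alive_slot_left[OF assms(1,2)] below_children[OF assms(2)] popcount_double
      by (intro bexI[of _ v]) auto
  next
    case 2
    then obtain v where v: "v \<in> below (2 * n + 1)" "alive (2 ^ k - (2 * n + 1)) v"
      "graph_dist E w v \<le> popcount (leaf w) - popcount (2 * n + 1)"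
      using assms(4) unfolding dominated_below_def by blast
    have w: "w \<in> V" "popcount (2 * n + 1) \<le> popcount (leaf w)"
      using 2 in_subtree_popcount_le unfolding below_def by auto
    show ?thesis
    proof (cases "alive (2 ^ k - n) v")
      case True
      then show ?thesis using v below_children[OF assms(2)] popcount_double_Suc by (intro bexI[of _ v]) auto
    next
      case False
      then obtain u where u: "u \<in> below (2 * n)" "E v u" "alive (2 ^ k - 2 * n) u"
        using alive_slot_right[OF assms(1,2) v(1)] v(2) by blast
      obtain j where "(E ^^ j) w v" using reachable[OF w(1)] v(1) unfolding below_def by blast
      then have "graph_dist E w u \<le> graph_dist E w v + 1" using u(2) by (rule graph_dist_Suc_le)
      then show ?thesis
        using u v(3) w(2) alive_slot_left[OF assms(1,2)] below_children[OF assms(2)] popcount_double_Suc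
        by (intro bexI[of _ u]) auto
    qed
  qed
qed

lemma survivors_independent: "independent_below 1"
proof (rule heap_node_induct)
  show "1 < (2::nat) ^ Suc k" by (rule one_less_power) simp_all
qed (auto intro: independent_below_leaf independent_below_parent)

lemma survivors_dominate: "dominated_below 1"
proof (rule heap_node_induct)
  show "1 < (2::nat) ^ Suc k" by (rule one_less_power) simp_all
qed (auto intro: dominated_below_leaf dominated_below_parent)

lemma energy_le_depth:
  assumes "v \<in> V"
  shows "energy ruling_alg N ident E sel (2 ^ k - 1) v \<le> k"
proof -
  have active: "{t. t < 2 ^ k - 1 \<and> act ruling_alg N (ident v) (H t v) \<noteq> Idle}
      \<subseteq> (\<lambda>j. 2 ^ k - 1 - leaf v div 2 ^ j) ` {1..k}"
  proof
    fix t assume t: "t \<in> {t. t < 2 ^ k - 1 \<and> act ruling_alg N (ident v) (H t v) \<noteq> Idle}"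
    define n where "n = 2 ^ k - 1 - t"
    have n: "n < 2 ^ k" "1 \<le> n" "t = 2 ^ k - 1 - n" using t unfolding n_def by auto
    then have "in_subtree (leaf v) (2 * n) \<or> in_subtree (leaf v) (2 * n + 1)"
      using t act_slot[OF n(1) assms] by (auto split: if_splits)
    then obtain j where j: "leaf v div 2 ^ j = n"
      using in_subtree_parent unfolding in_subtree_def by blast
    have leaf: "2 ^ k \<le> leaf v" "leaf v < 2 ^ Suc k" using leaf_bounds[OF assms] by auto
    have "j \<noteq> 0" using j n leaf by (cases "j = 0") auto
    moreover have "j \<le> k"
    proof (rule ccontr)
      assume "\<not> j \<le> k"
      then have "(2::nat) ^ Suc k \<le> 2 ^ j" by (intro power_increasing) auto
      then have "leaf v div 2 ^ j = 0" using leaf by (simp add: div_eq_0_iff)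
      then show False using j n by simp
    qed
    ultimately show "t \<in> (\<lambda>j. 2 ^ k - 1 - leaf v div 2 ^ j) ` {1..k}" using j n(3) by auto
  qed
  have "energy ruling_alg N ident E sel (2 ^ k - 1) v \<le> card ((\<lambda>j. 2 ^ k - 1 - leaf v div 2 ^ j) ` {1..k})"
    unfolding energy_def by (rule card_mono[OF _ active]) simp
  also have "\<dots> \<le> k" using card_image_le[of "{1..k}"] by simp
  finally show ?thesis .
qed

lemma survivors_ruling_set: "ruling_set V E 2 (log 2 (real N)) {v \<in> V. alive (2 ^ k - 1) v}"
  unfolding ruling_set_def
proof (intro conjI ballI impI)
  fix u v assume uv: "u \<in> {v \<in> V. alive (2 ^ k - 1) v}" "v \<in> {v \<in> V. alive (2 ^ k - 1) v}" "u \<noteq> v"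
  then have "\<not> E u v" using survivors_independent below_root unfolding independent_below_def by auto
  moreover obtain j where "(E ^^ j) u v" using reachable uv by blast
  ultimately show "2 \<le> graph_dist E u v" using uv(3) graph_dist_ge_2 by (metis of_nat_numeral of_nat_le_iff)
next
  fix w assume w: "w \<in> V"
  then obtain v where v: "v \<in> V" "alive (2 ^ k - 1) v" "graph_dist E w v \<le> popcount (leaf w) - popcount 1"
    using survivors_dominate below_root unfolding dominated_below_def by auto
  have i: "ident w - 1 < 2 ^ k" "ident w - 1 + 1 \<le> N"
    using ident_range[OF w] le_two_power_ceillog2[of N] by auto
  have "popcount (leaf w) - popcount 1 = popcount (ident w - 1)"
    using popcount_power_add[OF i(1)] popcount_double_Suc[of 0] unfolding leaf_def heap_leaf_def by simp
  moreover have "2 ^ popcount (ident w - 1) \<le> N" using power_popcount_le[of "ident w - 1"] i(2) by linarith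
  ultimately have "real (graph_dist E w v) \<le> log 2 (real N)"
    using v(3) le_log2_of_power by fastforce
  then show "\<exists>v \<in> {v \<in> V. alive (2 ^ k - 1) v}. real (graph_dist E w v) \<le> log 2 (real N)"
    using v by blast
qed auto

lemma run_guarantees:
  "\<exists>T. real T \<le> 2 * real N
     \<and> (\<forall>v \<in> V. out ruling_alg N (ident v) (H T v) \<noteq> None)
     \<and> ruling_set V E 2 (log 2 (real N)) {v \<in> V. out ruling_alg N (ident v) (H T v) = Some True}
     \<and> (\<forall>v \<in> V. real (energy ruling_alg N ident E sel T v) \<le> 2 * log 2 (real N) + 2)"
proof (intro exI conjI ballI)
  let ?T = "2 ^ k - 1"
  show "real ?T \<le> 2 * real N" using two_power_ceillog2_gt[OF N_pos] by linarith
  show "out ruling_alg N (ident v) (H ?T v) \<noteq> None" for v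
    unfolding out_hist by simp
  show "ruling_set V E 2 (log 2 (real N)) {v \<in> V. out ruling_alg N (ident v) (H ?T v) = Some True}"
    unfolding out_hist using survivors_ruling_set by simp
  show "real (energy ruling_alg N ident E sel ?T v) \<le> 2 * log 2 (real N) + 2" if "v \<in> V" for v
    using energy_le_depth[OF that] ceillog2_less_log[OF N_pos] N_pos by simp
qed

end

theorem lemma15:
  shows "\<exists>(A::algorithm) (c::real). halting A \<and>
    (\<forall>N V E ident sel.
       connected_graph V E \<and> valid_ids V N ident \<and> valid_adversary sel \<longrightarrow>
       (\<exists>T. real T \<le> c * real N
          \<and> (\<forall>v\<in>V. out A N (ident v) (hist A N ident E sel T v) \<noteq> None)
          \<and> ruling_set V E 2 (log 2 (real N))
              {v\<in>V. out A N (ident v) (hist A N ident E sel T v) = Some True}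
          \<and> (\<forall>v\<in>V. real (energy A N ident E sel T v) \<le> c * log 2 (real N) + c)))"
proof (intro exI[of _ ruling_alg] exI[of _ "2::real"] conjI halting_ruling_alg allI impI)
  fix N V E ident sel
  assume "connected_graph V E \<and> valid_ids V N ident \<and> valid_adversary sel"
  then show "\<exists>T. real T \<le> 2 * real N
     \<and> (\<forall>v \<in> V. out ruling_alg N (ident v) (hist ruling_alg N ident E sel T v) \<noteq> None)
     \<and> ruling_set V E 2 (log 2 (real N))
         {v \<in> V. out ruling_alg N (ident v) (hist ruling_alg N ident E sel T v) = Some True}
     \<and> (\<forall>v \<in> V. real (energy ruling_alg N ident E sel T v) \<le> 2 * log 2 (real N) + 2)"
    using ruling_run.run_guarantees unfolding ruling_run_def by blast
qed

end
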